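(* Let $\mathcal{R}\colon\mathbf{Mod}_{\mathbb{R}_{\geq0}}\to\mathbf{Vect}_{\mathbb{R}}$ be a left adjoint to the forgetful functor $\mathbf{Vect}_{\mathbb{R}}\to\mathbf{Mod}_{\mathbb{R}_{\geq0}}$ (restriction of scalars along $\mathbb{R}_{\geq0}\hookrightarrow\mathbb{R}$), and let $\mathcal{C}\colon\mathbf{Vect}_{\mathbb{R}}\to\mathbf{Vect}_{\mathbb{C}}$ be a left adjoint to the forgetful functor $\mathbf{Vect}_{\mathbb{C}}\to\mathbf{Vect}_{\mathbb{R}}$ (restriction of scalars along $\mathbb{R}\hookrightarrow\mathbb{C}$). For a finite-dimensional complex Hilbert space $H$, the transpose under the first adjunction of the inclusion $\mathcal{Pos}(H)\hookrightarrow\mathcal{SA}(H)$ (a map in $\mathbf{Mod}_{\mathbb{R}_{\geq0}}$) is an isomorphism $\mathcal{R}(\mathcal{Pos}(H))\cong\mathcal{SA}(H)$ in $\mathbf{Vect}_{\mathbb{R}}$, and the transpose under the second adjunction of the inclusion $\mathcal{SA}(H)\hookrightarrow\mathcal{B}(H)$ (a map in $\mathbf{Vect}_{\mathbb{R}}$) is an isomorphism $\mathcal{C}(\mathcal{SA}(H))\cong\mathcal{B}(H)$ in $\mathbf{Vect}_{\mathbb{C}}$. Consequently $\mathcal{R}\circ\mathcal{Pos}\cong\mathcal{SA}$ and $\mathcal{C}\circ\mathcal{SA}\cong\mathcal{B}$ as functors on $\mathbf{FdHilb}$.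
   Context: For a finite-dimensional complex Hilbert space $H$: $\mathcal{B}(H)$ is the complex vector space of linear operators $H\to H$; $\mathcal{SA}(H)\subseteq\mathcal{B}(H)$ is the real vector space of self-adjoint operators ($A^\dagger=A$); $\mathcal{Pos}(H)\subseteq\mathcal{SA}(H)$ is the $\mathbb{R}_{\geq0}$-module of positive operators ($\langle Ax,x\rangle\ge0$ for all $x$). $\mathbf{FdHilb}$ is the category of finite-dimensional complex Hilbert spaces and linear maps, and $\mathcal{B},\mathcal{SA},\mathcal{Pos}$ are functors from it (to $\mathbf{Vect}_{\mathbb{C}}$, $\mathbf{Vect}_{\mathbb{R}}$, $\mathbf{Mod}_{\mathbb{R}_{\ge0}}$ respectively) sending $C\colon H\to K$ to $A\mapsto CAC^{\dagger}$. $\mathbf{Mod}_{\mathbb{R}_{\geq0}}$ is the category of modules over the semiring $\mathbb{R}_{\geq0}$ (commutative monoids with a scalar multiplication by non-negative reals that is additive in each argument, unital and associative) with linear maps; $\mathbf{Vect}_{\mathbb{R}}$, $\mathbf{Vect}_{\mathbb{C}}$ are the categories of real, resp. complex, vector spaces. *)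

theory Defs
  imports "HOL-Analysis.Analysis" "HOL-Library.Complex_Order"
begin

text \<open>A finite-dimensional complex Hilbert space H is modelled as complex^'n with the
standard inner product; operators on H are matrices complex^'n^'n.\<close>

definition cinner :: "complex^'n \<Rightarrow> complex^'n \<Rightarrow> complex" where
  "cinner x y = (\<Sum>i\<in>UNIV. x$i * cnj (y$i))"

definition cadj :: "complex^'n^'m \<Rightarrow> complex^'m^'n" where
  "cadj A = (\<chi> i j. cnj (A$j$i))"

definition cscale :: "complex \<Rightarrow> complex^'n^'m \<Rightarrow> complex^'n^'m" where
  "cscale c A = (\<chi> i j. c * A$i$j)"

definition Bops :: "(complex^'n^'n) set" where "Bops = UNIV"
definition SA :: "(complex^'n^'n) set" where "SA = {A. cadj A = A}"
definition Pos :: "(complex^'n^'n) set" where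
  "Pos = {A. \<forall>x. 0 \<le> cinner (A *v x) x}"

text \<open>Action of the functors on a morphism C: A \<mapsto> C A C^*\<close>
definition conj_map :: "complex^'n^'m \<Rightarrow> complex^'n^'n \<Rightarrow> complex^'m^'m" where
  "conj_map C A = C ** A ** cadj C"

definition pos_linear_on :: "(real \<Rightarrow> 'v \<Rightarrow> 'v) \<Rightarrow> 'a::real_vector set \<Rightarrow> ('a \<Rightarrow> 'v::ab_group_add) \<Rightarrow> bool" where
  "pos_linear_on s S f \<longleftrightarrow> (\<forall>A\<in>S. \<forall>B\<in>S. f (A + B) = f A + f B) \<and>
                           (\<forall>r\<ge>0. \<forall>A\<in>S. f (r *\<^sub>R A) = s r (f A))"

definition real_linear_on :: "(real \<Rightarrow> 'v \<Rightarrow> 'v) \<Rightarrow> 'a::real_vector set \<Rightarrow> ('a \<Rightarrow> 'v::ab_group_add) \<Rightarrow> bool" where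
  "real_linear_on s S f \<longleftrightarrow> (\<forall>A\<in>S. \<forall>B\<in>S. f (A + B) = f A + f B) \<and>
                           (\<forall>r. \<forall>A\<in>S. f (r *\<^sub>R A) = s r (f A))"

definition complex_linear_ops :: "(complex \<Rightarrow> 'w \<Rightarrow> 'w) \<Rightarrow> (complex^'n^'n \<Rightarrow> 'w::ab_group_add) \<Rightarrow> bool" where
  "complex_linear_ops s g \<longleftrightarrow> (\<forall>A B. g (A + B) = g A + g B) \<and>
                           (\<forall>c A. g (cscale c A) = s c (g A))"

end

theory Submission
  imports Defs
begin

text \<open>A self-adjoint matrix A becomes positive after adding c\<cdot>1, with c the sum of the moduli
of its entries, so the self-adjoint matrices are exactly the differences of positive ones;
conversely a positive matrix is self-adjoint by polarization. Hence SA(H) is the real span of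
the cone Pos(H), and an additive, positively homogeneous map on a cone extends uniquely to the
span by f(P - N) = f P - f N. Likewise every matrix splits uniquely as B = Re B + i Im B with
Re B, Im B self-adjoint, so an R-linear map h on SA(H) extends uniquely to the C-linear map
B \<mapsto> h(Re B) + i h(Im B).\<close>

definition quad_form :: "complex^'n^'n \<Rightarrow> complex^'n \<Rightarrow> complex" where
  "quad_form A x = cinner (A *v x) x"

lemma Pos_quad_form: "Pos = {A. \<forall>x. 0 \<le> quad_form A x}"
  by (simp add: Pos_def quad_form_def)

lemma quad_form_expand: "quad_form A x = (\<Sum>i\<in>UNIV. \<Sum>j\<in>UNIV. A$i$j * x$j * cnj (x$i))"
  by (simp add: quad_form_def cinner_def matrix_vector_mult_def sum_distrib_right)

lemma quad_form_axis: "quad_form A (axis i a) = A$i$i * a * cnj a"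
  by (simp add: quad_form_expand axis_def if_distrib[of "\<lambda>x. _ * x"] if_distrib[of cnj]
      if_distrib[of "\<lambda>x. x * _"] sum.delta sum.delta' sum.If_cases cong: if_cong)

lemma quad_form_axis_pair:
  assumes "i \<noteq> j"
  shows "quad_form A (axis i a + axis j b) =
    A$i$i * a * cnj a + A$i$j * b * cnj a + A$j$i * a * cnj b + A$j$j * b * cnj b"
  using assms
  by (simp add: quad_form_expand axis_def algebra_simps sum.distrib if_distrib[of "\<lambda>x. _ * x"]
      if_distrib[of cnj] if_distrib[of "\<lambda>x. x * _"] sum.delta cong: if_cong)

lemma quad_form_add: "quad_form (A + B) x = quad_form A x + quad_form B x"
  by (simp add: quad_form_expand algebra_simps sum.distrib)

lemma quad_form_scaleR: "quad_form (r *\<^sub>R A) x = complex_of_real r * quad_form A x"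
  by (simp add: quad_form_expand scaleR_conv_of_real[where 'a=complex] sum_distrib_left mult_ac)

lemma norm_vec_power2: "(norm x)\<^sup>2 = (\<Sum>i\<in>UNIV. (cmod (x$i))\<^sup>2)"
  by (simp add: norm_vec_def L2_set_def sum_nonneg)

lemma quad_form_mat: "quad_form (mat k) x = k * complex_of_real ((norm x)\<^sup>2)"
proof -
  have "quad_form (mat k) x = (\<Sum>i\<in>UNIV. k * (x$i * cnj (x$i)))"
    by (simp add: quad_form_expand mat_def if_distrib[of "\<lambda>x. x * _"] if_distrib[of "\<lambda>x. _ * x"]
        sum.delta' mult_ac cong: if_cong)
  then show ?thesis
    by (simp add: norm_vec_power2 sum_distrib_left complex_norm_square[symmetric])
qed

lemma norm_quad_form_le:
  "cmod (quad_form A x) \<le> (\<Sum>i\<in>UNIV. \<Sum>j\<in>UNIV. cmod (A$i$j)) * (norm x)\<^sup>2"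
proof -
  have entry: "cmod (A$i$j * x$j * cnj (x$i)) \<le> cmod (A$i$j) * (norm x)\<^sup>2" for i j
  proof -
    have "cmod (x$j) * cmod (x$i) \<le> norm x * norm x"
      by (intro mult_mono) (simp_all add: Finite_Cartesian_Product.norm_nth_le)
    then show ?thesis
      by (simp add: norm_mult power2_eq_square mult.assoc mult_left_mono)
  qed
  have "cmod (quad_form A x) \<le> (\<Sum>i\<in>UNIV. \<Sum>j\<in>UNIV. cmod (A$i$j * x$j * cnj (x$i)))"
    unfolding quad_form_expand by (rule order_trans[OF norm_sum sum_mono]) (rule norm_sum)
  also have "\<dots> \<le> (\<Sum>i\<in>UNIV. \<Sum>j\<in>UNIV. cmod (A$i$j) * (norm x)\<^sup>2)"
    by (intro sum_mono entry)
  finally show ?thesis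
    by (simp add: sum_distrib_right)
qed

lemma cinner_matrix_vector_adj: "cinner (C *v y) x = cinner y (cadj C *v x)"
proof -
  have "cinner (C *v y) x = (\<Sum>i\<in>UNIV. \<Sum>j\<in>UNIV. C$i$j * y$j * cnj (x$i))"
    by (simp add: cinner_def matrix_vector_mult_def sum_distrib_right)
  also have "\<dots> = (\<Sum>j\<in>UNIV. \<Sum>i\<in>UNIV. C$i$j * y$j * cnj (x$i))"
    by (rule sum.swap)
  also have "\<dots> = cinner y (cadj C *v x)"
    by (simp add: cinner_def cadj_def matrix_vector_mult_def sum_distrib_left mult_ac)
  finally show ?thesis .
qed

lemma cadj_matrix_mult: "cadj (A ** B) = cadj B ** cadj A"
  by (simp add: cadj_def matrix_matrix_mult_def vec_eq_iff mult.commute)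

lemma cadj_cadj: "cadj (cadj A) = A"
  by (simp add: cadj_def vec_eq_iff)

lemma Im_quad_form_SA: "A \<in> SA \<Longrightarrow> Im (quad_form A x) = 0"
proof -
  assume "A \<in> SA"
  then have entry: "cnj (A$i$j) = A$j$i" for i j
    by (simp add: SA_def cadj_def vec_eq_iff)
  have "cnj (quad_form A x) = (\<Sum>i\<in>UNIV. \<Sum>j\<in>UNIV. A$j$i * cnj (x$j) * x$i)"
    by (simp add: quad_form_expand entry)
  also have "\<dots> = (\<Sum>j\<in>UNIV. \<Sum>i\<in>UNIV. A$j$i * cnj (x$j) * x$i)"
    by (rule sum.swap)
  also have "\<dots> = quad_form A x"
    by (simp add: quad_form_expand mult_ac)
  finally show ?thesis
    by (simp add: complex_eq_iff)
qed

subsection \<open>Positive and self-adjoint matrices\<close>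

lemma Pos_subset_SA: "Pos \<subseteq> SA"
proof
  fix A :: "complex^'n^'n"
  assume "A \<in> Pos"
  then have real: "Im (quad_form A x) = 0" for x
    by (simp add: Pos_quad_form less_eq_complex_def)
  have diag: "Im (A$i$i) = 0" for i
    using real[of "axis i 1"] by (simp add: quad_form_axis)
  have "cnj (A$j$i) = A$i$j" for i j
  proof (cases "i = j")
    case True
    then show ?thesis using diag[of i] by (simp add: complex_eq_iff)
  next
    case False
    \<comment> \<open>polarization with the test vectors e_i + e_j and e_i + \<i> e_j\<close>
    have "Im (A$i$j + A$j$i) = 0"
      using real[of "axis i 1 + axis j 1"] diag[of i] diag[of j] False
      by (simp add: quad_form_axis_pair)
    moreover have "Re (A$i$j - A$j$i) = 0"
      using real[of "axis i 1 + axis j \<i>"] diag[of i] diag[of j] False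
      by (simp add: quad_form_axis_pair)
    ultimately show ?thesis
      by (simp add: complex_eq_iff)
  qed
  then show "A \<in> SA"
    by (simp add: SA_def cadj_def vec_eq_iff)
qed

lemma Pos_zero: "0 \<in> Pos"
  by (simp add: Pos_quad_form quad_form_expand)

lemma Pos_add: "A \<in> Pos \<Longrightarrow> B \<in> Pos \<Longrightarrow> A + B \<in> Pos"
  by (simp add: Pos_quad_form quad_form_add)

lemma Pos_scaleR: "0 \<le> r \<Longrightarrow> A \<in> Pos \<Longrightarrow> r *\<^sub>R A \<in> Pos"
  by (simp add: Pos_quad_form quad_form_scaleR less_eq_complex_def)

lemma mat_Pos: "0 \<le> c \<Longrightarrow> mat (complex_of_real c) \<in> Pos"
  by (simp add: Pos_quad_form quad_form_mat less_eq_complex_def)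

lemma SA_scaleR: "A \<in> SA \<Longrightarrow> r *\<^sub>R A \<in> SA"
  by (simp add: SA_def cadj_def vec_eq_iff scaleR_conv_of_real[where 'a=complex])

lemma SA_diff: "A \<in> SA \<Longrightarrow> B \<in> SA \<Longrightarrow> A - B \<in> SA"
  by (simp add: SA_def cadj_def vec_eq_iff)

lemma SA_plus_mat_Pos:
  fixes A :: "complex^'n^'n"
  assumes "A \<in> SA"
  defines "c \<equiv> \<Sum>i\<in>UNIV. \<Sum>j\<in>UNIV. cmod (A$i$j)"
  shows "A + mat (complex_of_real c) \<in> Pos"
  unfolding Pos_quad_form
proof (intro CollectI allI)
  fix x :: "complex^'n"
  have "- Re (quad_form A x) \<le> cmod (quad_form A x)"
    using abs_Re_le_cmod[of "quad_form A x"] by linarith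
  also have "\<dots> \<le> c * (norm x)\<^sup>2"
    unfolding c_def by (rule norm_quad_form_le)
  finally show "0 \<le> quad_form (A + mat (complex_of_real c)) x"
    using Im_quad_form_SA[OF assms(1)] by (simp add: quad_form_add quad_form_mat less_eq_complex_def)
qed

definition differences :: "'a::ab_group_add set \<Rightarrow> 'a set" where
  "differences K = {P - N | P N. P \<in> K \<and> N \<in> K}"

lemma SA_eq_differences_Pos: "SA = differences Pos"
proof
  show "SA \<subseteq> differences Pos"
  proof
    fix A :: "complex^'n^'n"
    assume A: "A \<in> SA"
    define c where "c = (\<Sum>i\<in>UNIV. \<Sum>j\<in>UNIV. cmod (A$i$j))"
    have "A = (A + mat (complex_of_real c)) - mat (complex_of_real c)"
      by simp
    moreover have "A + mat (complex_of_real c) \<in> Pos"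
      unfolding c_def using A by (rule SA_plus_mat_Pos)
    moreover have "mat (complex_of_real c) \<in> Pos"
      unfolding c_def by (intro mat_Pos sum_nonneg) simp
    ultimately show "A \<in> differences Pos"
      unfolding differences_def by blast
  qed
  show "differences Pos \<subseteq> SA"
    using Pos_subset_SA by (auto simp: differences_def intro: SA_diff)
qed

lemma conj_map_Pos: "A \<in> Pos \<Longrightarrow> conj_map C A \<in> Pos"
proof -
  assume "A \<in> Pos"
  have "(C ** A ** cadj C) *v x = C *v (A *v (cadj C *v x))" for x
    by (simp add: matrix_vector_mul_assoc[symmetric] matrix_mul_assoc)
  then have "quad_form (conj_map C A) x = quad_form A (cadj C *v x)" for x
    unfolding conj_map_def quad_form_def by (simp only: cinner_matrix_vector_adj)
  then show ?thesis
    using \<open>A \<in> Pos\<close> by (simp add: Pos_quad_form)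
qed

lemma conj_map_SA: "A \<in> SA \<Longrightarrow> conj_map C A \<in> SA"
  by (simp add: SA_def conj_map_def cadj_matrix_mult cadj_cadj matrix_mul_assoc)

subsection \<open>Extending maps from a cone to its real span\<close>

lemma real_linear_on_differences_diff:
  assumes "vector_space s" and g: "real_linear_on s (differences K) g"
    and "0 \<in> K" and "P \<in> K" and "N \<in> K"
  shows "g (P - N) = g P - g N"
proof -
  interpret vector_space s by fact
  have "P \<in> differences K" "(-1::real) *\<^sub>R N \<in> differences K"
    using assms(3-5) unfolding differences_def by force+
  moreover have "N \<in> differences K"
    using assms(3,5) unfolding differences_def by force
  ultimately have "g (P + (-1::real) *\<^sub>R N) = g P + s (-1) (g N)"
    using g unfolding real_linear_on_def by metis
  then show ?thesis
    by simp
qed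

lemma real_linear_on_differences_unique:
  assumes "vector_space s"
    and "real_linear_on s (differences K) g1" and "real_linear_on s (differences K) g2"
    and "0 \<in> K" and "\<forall>A\<in>K. g1 A = g2 A"
  shows "\<forall>A\<in>differences K. g1 A = g2 A"
  using assms real_linear_on_differences_diff[OF assms(1,2,4)]
    real_linear_on_differences_diff[OF assms(1,3,4)]
  by (auto simp: differences_def)

lemma pos_linear_on_diff_eq:
  assumes "pos_linear_on s K f"
    and "P \<in> K" "N \<in> K" "P' \<in> K" "N' \<in> K" and "P - N = P' - N'"
  shows "f P - f N = f P' - f N'"
proof -
  have "P + N' = P' + N"
    using assms(6) by (simp add: algebra_simps)
  then have "f P + f N' = f P' + f N"
    using assms(1-5) unfolding pos_linear_on_def by metis
  then show ?thesis
    by (simp add: algebra_simps)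
qed

lemma pos_linear_on_extends_to_differences:
  fixes K :: "'a::real_vector set" and f :: "'a \<Rightarrow> 'v::ab_group_add"
  assumes "vector_space s" and f: "pos_linear_on s K f"
    and K_zero: "0 \<in> K" and K_add: "\<And>A B. A \<in> K \<Longrightarrow> B \<in> K \<Longrightarrow> A + B \<in> K"
    and K_scaleR: "\<And>r A. 0 \<le> r \<Longrightarrow> A \<in> K \<Longrightarrow> r *\<^sub>R A \<in> K"
  shows "\<exists>g. real_linear_on s (differences K) g \<and> (\<forall>A\<in>K. g A = f A)"
proof -
  interpret vector_space s by fact
  have f_add: "\<And>A B. A \<in> K \<Longrightarrow> B \<in> K \<Longrightarrow> f (A + B) = f A + f B"
    and f_scaleR: "\<And>r A. 0 \<le> r \<Longrightarrow> A \<in> K \<Longrightarrow> f (r *\<^sub>R A) = s r (f A)"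
    using f by (auto simp: pos_linear_on_def)
  define g where "g A = (SOME d. \<exists>P\<in>K. \<exists>N\<in>K. A = P - N \<and> d = f P - f N)" for A
  have g_diff: "g (P - N) = f P - f N" if "P \<in> K" "N \<in> K" for P N
    unfolding g_def by (rule some_equality) (use that in \<open>auto intro: pos_linear_on_diff_eq[OF f]\<close>)
  have "real_linear_on s (differences K) g"
    unfolding real_linear_on_def differences_def
  proof (intro conjI ballI allI; clarify)
    fix P N P' N'
    assume K: "P \<in> K" "N \<in> K" "P' \<in> K" "N' \<in> K"
    have "P - N + (P' - N') = (P + P') - (N + N')"
      by (simp add: algebra_simps)
    then show "g (P - N + (P' - N')) = g (P - N) + g (P' - N')"
      using K by (simp add: g_diff K_add f_add algebra_simps)
  next
    fix r and P N
    assume K: "P \<in> K" "N \<in> K"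
    show "g (r *\<^sub>R (P - N)) = s r (g (P - N))"
    proof (cases "0 \<le> r")
      case True
      then show ?thesis
        using K by (simp add: scaleR_diff_right g_diff K_scaleR f_scaleR scale_right_diff_distrib)
    next
      case False
      then have r: "0 \<le> - r"
        by simp
      have "g (r *\<^sub>R (P - N)) = g ((- r) *\<^sub>R N - (- r) *\<^sub>R P)"
        by (simp add: algebra_simps)
      also have "\<dots> = s (- r) (f N) - s (- r) (f P)"
        using K r by (simp only: g_diff K_scaleR f_scaleR)
      also have "\<dots> = s r (g (P - N))"
        using K by (simp add: g_diff scale_right_diff_distrib)
      finally show ?thesis .
    qed
  qed
  moreover have "\<forall>A\<in>K. g A = f A"
    using g_diff[OF _ K_zero] f_add[OF K_zero K_zero] by simp
  ultimately show ?thesis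
    by blast
qed

definition op_re :: "complex^'n^'n \<Rightarrow> complex^'n^'n" where
  "op_re B = (\<chi> i j. (B$i$j + cnj (B$j$i)) / 2)"

definition op_im :: "complex^'n^'n \<Rightarrow> complex^'n^'n" where
  "op_im B = (\<chi> i j. - \<i> * (B$i$j - cnj (B$j$i)) / 2)"

lemma op_re_SA: "op_re B \<in> SA"
  by (simp add: SA_def op_re_def cadj_def vec_eq_iff add.commute)

lemma op_im_SA: "op_im B \<in> SA"
  by (simp add: SA_def op_im_def cadj_def vec_eq_iff field_simps)

lemma op_re_plus_i_op_im: "op_re B + cscale \<i> (op_im B) = B"
  by (simp add: op_re_def op_im_def cscale_def vec_eq_iff field_simps)

lemma op_re_SA_eq: "A \<in> SA \<Longrightarrow> op_re A = A"
  by (simp add: SA_def op_re_def cadj_def vec_eq_iff)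

lemma op_im_SA_eq: "A \<in> SA \<Longrightarrow> op_im A = 0"
  by (simp add: SA_def op_im_def cadj_def vec_eq_iff)

lemma op_re_add: "op_re (A + B) = op_re A + op_re B"
  by (simp add: op_re_def vec_eq_iff add_divide_distrib)

lemma op_im_add: "op_im (A + B) = op_im A + op_im B"
  by (simp add: op_im_def vec_eq_iff field_simps)

lemma op_re_cscale: "op_re (cscale c B) = Re c *\<^sub>R op_re B - Im c *\<^sub>R op_im B"
  by (simp add: op_re_def op_im_def cscale_def vec_eq_iff complex_eq_iff algebra_simps field_simps)

lemma op_im_cscale: "op_im (cscale c B) = Re c *\<^sub>R op_im B + Im c *\<^sub>R op_re B"
  by (simp add: op_re_def op_im_def cscale_def vec_eq_iff complex_eq_iff algebra_simps field_simps)

subsection \<open>Extending real-linear maps from SA(H) to B(H)\<close>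

lemma complex_linear_ops_re_im_extension:
  fixes s :: "complex \<Rightarrow> 'w::ab_group_add \<Rightarrow> 'w" and h :: "complex^'n^'n \<Rightarrow> 'w"
  assumes "vector_space s" and h: "real_linear_on (\<lambda>r. s (complex_of_real r)) SA h"
  shows "complex_linear_ops s (\<lambda>B. h (op_re B) + s \<i> (h (op_im B)))"
    (is "complex_linear_ops s ?g")
  unfolding complex_linear_ops_def
proof (intro conjI allI)
  interpret vector_space s by fact
  have h_add: "\<And>A B. A \<in> SA \<Longrightarrow> B \<in> SA \<Longrightarrow> h (A + B) = h A + h B"
    and h_scaleR: "\<And>r A. A \<in> SA \<Longrightarrow> h (r *\<^sub>R A) = s (complex_of_real r) (h A)"
    using h by (auto simp: real_linear_on_def)
  have h_diff: "h (A - B) = h A - h B" if "A \<in> SA" "B \<in> SA" for A B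
    using h_add[OF that(1) SA_scaleR[OF that(2), of "-1"]] h_scaleR[OF that(2), of "-1"] by simp
  fix A B :: "complex^'n^'n" and c :: complex
  show "?g (A + B) = ?g A + ?g B"
    unfolding op_re_add op_im_add
    by (simp add: h_add op_re_SA op_im_SA scale_right_distrib add_ac)
  let ?a = "complex_of_real (Re c)" and ?b = "complex_of_real (Im c)"
  have "?g (cscale c A) = (s ?a (h (op_re A)) - s ?b (h (op_im A)))
      + s \<i> (s ?a (h (op_im A)) + s ?b (h (op_re A)))"
    unfolding op_re_cscale op_im_cscale
    by (simp only: h_diff h_add h_scaleR SA_scaleR op_re_SA op_im_SA)
  also have "\<dots> = s (?a + \<i> * ?b) (h (op_re A)) + s ((?a + \<i> * ?b) * \<i>) (h (op_im A))"
    by (simp add: algebra_simps scale_left_distrib scale_right_distrib)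
  also have "\<dots> = s c (?g A)"
    by (simp add: complex_eq[symmetric] mult.commute scale_right_distrib)
  finally show "?g (cscale c A) = s c (?g A)" .
qed

lemma complex_linear_extension_from_SA:
  fixes s :: "complex \<Rightarrow> 'w::ab_group_add \<Rightarrow> 'w" and h :: "complex^'n^'n \<Rightarrow> 'w"
  assumes "vector_space s" and h: "real_linear_on (\<lambda>r. s (complex_of_real r)) SA h"
  shows "\<exists>!g. complex_linear_ops s g \<and> (\<forall>A\<in>SA. g A = h A)"
proof
  interpret vector_space s by fact
  let ?g = "\<lambda>B. h (op_re B) + s \<i> (h (op_im B))"
  have "h (0 *\<^sub>R op_re 0) = s (complex_of_real 0) (h (op_re 0))"
    using h op_re_SA[of 0] unfolding real_linear_on_def by blast
  then have "h 0 = 0"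
    by simp
  then show "complex_linear_ops s ?g \<and> (\<forall>A\<in>SA. ?g A = h A)"
    using complex_linear_ops_re_im_extension[OF assms] by (simp add: op_re_SA_eq op_im_SA_eq)
  fix g
  assume g: "complex_linear_ops s g \<and> (\<forall>A\<in>SA. g A = h A)"
  show "g = ?g"
  proof
    fix B
    have "g B = g (op_re B) + s \<i> (g (op_im B))"
      using g op_re_plus_i_op_im[of B] unfolding complex_linear_ops_def by metis
    then show "g B = ?g B"
      using g op_re_SA[of B] op_im_SA[of B] by simp
  qed
qed

theorem theorem3p3:
  shows
  \<comment> \<open>Pos(H) \<hookrightarrow> SA(H) is a universal arrow to the forgetful functor Vect_R \<rightarrow> Mod_R>=0,
      i.e. its transpose R(Pos(H)) \<rightarrow> SA(H) is an isomorphism\<close>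
  "(Pos :: (complex^'n^'n) set) \<subseteq> SA
   \<and> (\<forall>(s :: real \<Rightarrow> 'v::ab_group_add \<Rightarrow> 'v) (f :: complex^'n^'n \<Rightarrow> 'v).
        vector_space s \<and> pos_linear_on s Pos f \<longrightarrow>
          (\<exists>g. real_linear_on s SA g \<and> (\<forall>A\<in>Pos. g A = f A)) \<and>
          (\<forall>g1 g2. real_linear_on s SA g1 \<and> (\<forall>A\<in>Pos. g1 A = f A) \<and>
                   real_linear_on s SA g2 \<and> (\<forall>A\<in>Pos. g2 A = f A) \<longrightarrow>
                   (\<forall>A\<in>SA. g1 A = g2 A)))
   \<comment> \<open>SA(H) \<hookrightarrow> B(H) is a universal arrow to the forgetful functor Vect_C \<rightarrow> Vect_R,
       i.e. its transpose C(SA(H)) \<rightarrow> B(H) is an isomorphism\<close>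
   \<and> (\<forall>(s :: complex \<Rightarrow> 'w::ab_group_add \<Rightarrow> 'w) (h :: complex^'n^'n \<Rightarrow> 'w).
        vector_space s \<and> real_linear_on (\<lambda>r. s (complex_of_real r)) SA h \<longrightarrow>
          (\<exists>!g. complex_linear_ops s g \<and> (\<forall>A\<in>SA. g A = h A)))
   \<comment> \<open>functoriality / naturality: A \<mapsto> C A C^* preserves Pos and SA (the comparison maps
       are then natural, being induced by the inclusions)\<close>
   \<and> (\<forall>C :: complex^'n::finite^'m::finite. (\<forall>A\<in>Pos. conj_map C A \<in> Pos) \<and> (\<forall>A\<in>SA. conj_map C A \<in> SA))"
proof (intro conjI allI impI ballI; (elim conjE)?)
  show "(Pos :: (complex^'n^'n) set) \<subseteq> SA"
    by (rule Pos_subset_SA)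
next
  fix s :: "real \<Rightarrow> 'v \<Rightarrow> 'v" and f :: "complex^'n^'n \<Rightarrow> 'v"
  assume "vector_space s" "pos_linear_on s Pos f"
  then show "\<exists>g. real_linear_on s SA g \<and> (\<forall>A\<in>Pos. g A = f A)"
    unfolding SA_eq_differences_Pos
    by (rule pos_linear_on_extends_to_differences) (auto intro: Pos_zero Pos_add Pos_scaleR)
  fix g1 g2 and A :: "complex^'n^'n"
  assume g1: "real_linear_on s SA g1" "\<forall>A\<in>Pos. g1 A = f A"
    and g2: "real_linear_on s SA g2" "\<forall>A\<in>Pos. g2 A = f A" and "A \<in> SA"
  have "\<forall>A\<in>differences Pos. g1 A = g2 A"
    using \<open>vector_space s\<close> g1(1) g2(1) Pos_zero unfolding SA_eq_differences_Pos
    by (rule real_linear_on_differences_unique) (simp add: g1(2) g2(2))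
  with \<open>A \<in> SA\<close> show "g1 A = g2 A"
    by (simp add: SA_eq_differences_Pos)
next
  fix s :: "complex \<Rightarrow> 'w \<Rightarrow> 'w" and h :: "complex^'n^'n \<Rightarrow> 'w"
  assume "vector_space s" "real_linear_on (\<lambda>r. s (complex_of_real r)) SA h"
  then show "\<exists>!g. complex_linear_ops s g \<and> (\<forall>A\<in>SA. g A = h A)"
    by (rule complex_linear_extension_from_SA)
qed (simp_all add: conj_map_Pos conj_map_SA)

end
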